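(* Let $G$ be a locally compact, Hausdorff, étale groupoid and $\alpha$ an automorphism of $G$. The following are equivalent: (1) $G^\infty_\alpha$ is principal; (2) $G$ is principal and, whenever $x \in G^{(0)}$ and $l\in\mathbb{Z}$ satisfy $[x] = [\alpha^l(x)]$, we have $l = 0$.
   Context: Let $E$ be the directed graph with one vertex $v$ and countably infinitely many edges $e_1,e_2,\dots$. Let $E^*$ be its finite paths (including $v$), $E^\infty$ its infinite paths, $P = E^*\sqcup E^\infty$, $|\mu|$ the length. $H_\infty$ is the groupoid $\{(\alpha x, |\alpha|-|\beta|, \beta x) : x\in P, \alpha,\beta\in E^*\}\subseteq P\times\mathbb{Z}\times P$ with $(x,m,y)(y,n,z)=(x,m+n,z)$, $(x,m,y)^{-1}=(y,-m,x)$, unit space identified with $P$, topology generated by the sets $Z((\alpha,\beta)\setminus F)=\{(\alpha x,|\alpha|-|\beta|,\beta x): x\in P, x\text{ does not begin with an edge in }F\}$ ($F$ finite); $c(x,m,y)=m$. An automorphism is a structure-preserving homeomorphism. $G^\infty_\alpha$ is $H_\infty\times G$ with product topology, unit space $H_\infty^{(0)}\times G^{(0)}$, $r(h,g)=(r(h),r(g))$, $s(h,g)=(s(h),\alpha^{c(h)}(s(g)))$, product $(h_1,g_1)(h_2,g_2)=(h_1h_2,g_1\alpha^{-c(h_1)}(g_2))$, inverse $(h,g)^{-1}=(h^{-1},\alpha^{c(h)}(g^{-1}))$. A groupoid is principal if $g\mapsto(r(g),s(g))$ is injective. For $u\in G^{(0)}$, $[u] = \{r(g) : s(g) = u\}$.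 *)

theory Defs
  imports "HOL-Analysis.Analysis"
begin

text \<open>A groupoid is given by its set of arrows G, range r, source s,
  a multiplication (meaningful on composable pairs, i.e. s g = r h) and an
  inverse. Units are the arrows u with r u = u.\<close>

definition composable :: "'a set \<Rightarrow> ('a \<Rightarrow> 'a) \<Rightarrow> ('a \<Rightarrow> 'a) \<Rightarrow> ('a \<times> 'a) set" where
  "composable G r s = {(g, h). g \<in> G \<and> h \<in> G \<and> s g = r h}"

definition groupoid ::
  "'a set \<Rightarrow> ('a \<Rightarrow> 'a) \<Rightarrow> ('a \<Rightarrow> 'a) \<Rightarrow> ('a \<Rightarrow> 'a \<Rightarrow> 'a) \<Rightarrow> ('a \<Rightarrow> 'a) \<Rightarrow> bool" where
  "groupoid G r s mul iv \<longleftrightarrow>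
     (\<forall>g\<in>G. r g \<in> G \<and> s g \<in> G \<and> iv g \<in> G) \<and>
     (\<forall>g\<in>G. r (r g) = r g \<and> s (r g) = r g \<and> r (s g) = s g \<and> s (s g) = s g) \<and>
     (\<forall>g\<in>G. \<forall>h\<in>G. s g = r h \<longrightarrow>
         mul g h \<in> G \<and> r (mul g h) = r g \<and> s (mul g h) = s h) \<and>
     (\<forall>g\<in>G. \<forall>h\<in>G. \<forall>k\<in>G. s g = r h \<and> s h = r k \<longrightarrow>
         mul (mul g h) k = mul g (mul h k)) \<and>
     (\<forall>g\<in>G. mul (r g) g = g \<and> mul g (s g) = g) \<and>
     (\<forall>g\<in>G. r (iv g) = s g \<and> s (iv g) = r g \<and>
         mul g (iv g) = r g \<and> mul (iv g) g = s g)"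

definition unit_space :: "'a set \<Rightarrow> ('a \<Rightarrow> 'a) \<Rightarrow> 'a set" where
  "unit_space G r = {u \<in> G. r u = u}"

definition topological_groupoid ::
  "'a set \<Rightarrow> 'a topology \<Rightarrow> ('a \<Rightarrow> 'a) \<Rightarrow> ('a \<Rightarrow> 'a) \<Rightarrow> ('a \<Rightarrow> 'a \<Rightarrow> 'a) \<Rightarrow> ('a \<Rightarrow> 'a) \<Rightarrow> bool" where
  "topological_groupoid G T r s mul iv \<longleftrightarrow>
     groupoid G r s mul iv \<and> topspace T = G \<and>
     continuous_map (subtopology (prod_topology T T) (composable G r s)) T (\<lambda>(g, h). mul g h) \<and>
     continuous_map T T iv"

definition etale_groupoid ::
  "'a set \<Rightarrow> 'a topology \<Rightarrow> ('a \<Rightarrow> 'a) \<Rightarrow> ('a \<Rightarrow> 'a) \<Rightarrow> ('a \<Rightarrow> 'a \<Rightarrow> 'a) \<Rightarrow> ('a \<Rightarrow> 'a) \<Rightarrow> bool" where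
  "etale_groupoid G T r s mul iv \<longleftrightarrow>
     topological_groupoid G T r s mul iv \<and>
     (\<forall>g\<in>G. \<exists>U. openin T U \<and> g \<in> U \<and>
        openin (subtopology T (unit_space G r)) (r ` U) \<and>
        homeomorphic_map (subtopology T U) (subtopology T (r ` U)) r)"

definition groupoid_automorphism ::
  "'a set \<Rightarrow> 'a topology \<Rightarrow> ('a \<Rightarrow> 'a) \<Rightarrow> ('a \<Rightarrow> 'a) \<Rightarrow> ('a \<Rightarrow> 'a \<Rightarrow> 'a) \<Rightarrow> ('a \<Rightarrow> 'a) \<Rightarrow> ('a \<Rightarrow> 'a) \<Rightarrow> bool" where
  "groupoid_automorphism G T r s mul iv \<alpha> \<longleftrightarrow>
     bij_betw \<alpha> G G \<and> homeomorphic_map T T \<alpha> \<and>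
     (\<forall>g\<in>G. \<alpha> (r g) = r (\<alpha> g) \<and> \<alpha> (s g) = s (\<alpha> g) \<and> \<alpha> (iv g) = iv (\<alpha> g)) \<and>
     (\<forall>g\<in>G. \<forall>h\<in>G. s g = r h \<longrightarrow> \<alpha> (mul g h) = mul (\<alpha> g) (\<alpha> h))"

definition apow :: "'a set \<Rightarrow> ('a \<Rightarrow> 'a) \<Rightarrow> int \<Rightarrow> 'a \<Rightarrow> 'a" where
  "apow G \<alpha> l = (if 0 \<le> l then \<alpha> ^^ nat l else (inv_into G \<alpha>) ^^ nat (- l))"

definition is_principal :: "'b set \<Rightarrow> ('b \<Rightarrow> 'c) \<Rightarrow> ('b \<Rightarrow> 'c) \<Rightarrow> bool" where
  "is_principal G r s \<longleftrightarrow> inj_on (\<lambda>g. (r g, s g)) G"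

definition gorbit :: "'a set \<Rightarrow> ('a \<Rightarrow> 'a) \<Rightarrow> ('a \<Rightarrow> 'a) \<Rightarrow> 'a \<Rightarrow> 'a set" where
  "gorbit G r s u = {r g | g. g \<in> G \<and> s g = u}"

section \<open>The path groupoid H_\<infinity> of the graph with one vertex and edges e_0, e_1, ...\<close>

text \<open>Edge e_(n+1) is encoded as the natural number n. Finite paths are lists
  of edges (the empty list is the vertex v), infinite paths are sequences.\<close>

datatype path = Fin "nat list" | Inf "nat \<Rightarrow> nat"

fun cat :: "nat list \<Rightarrow> path \<Rightarrow> path" where
  "cat a (Fin b) = Fin (a @ b)"
| "cat a (Inf f) = Inf (\<lambda>n. if n < length a then a ! n else f (n - length a))"

definition Hinf :: "(path \<times> int \<times> path) set" where
  "Hinf = {(cat a x, int (length a) - int (length b), cat b x) | a b x. True}"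

definition Hr :: "path \<times> int \<times> path \<Rightarrow> path" where
  "Hr h = fst h"

definition Hs :: "path \<times> int \<times> path \<Rightarrow> path" where
  "Hs h = snd (snd h)"

definition Hc :: "path \<times> int \<times> path \<Rightarrow> int" where
  "Hc h = fst (snd h)"

definition Ginf :: "'a set \<Rightarrow> ((path \<times> int \<times> path) \<times> 'a) set" where
  "Ginf G = Hinf \<times> G"

definition Ginf_r :: "('a \<Rightarrow> 'a) \<Rightarrow> (path \<times> int \<times> path) \<times> 'a \<Rightarrow> path \<times> 'a" where
  "Ginf_r r hg = (Hr (fst hg), r (snd hg))"

definition Ginf_s :: "'a set \<Rightarrow> ('a \<Rightarrow> 'a) \<Rightarrow> ('a \<Rightarrow> 'a) \<Rightarrow> (path \<times> int \<times> path) \<times> 'a \<Rightarrow> path \<times> 'a" where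
  "Ginf_s G s \<alpha> hg = (Hs (fst hg), apow G \<alpha> (Hc (fst hg)) (s (snd hg)))"

definition Ginf_mult :: "'a set \<Rightarrow> ('a \<Rightarrow> 'a \<Rightarrow> 'a) \<Rightarrow> ('a \<Rightarrow> 'a) \<Rightarrow>
    (path \<times> int \<times> path) \<times> 'a \<Rightarrow> (path \<times> int \<times> path) \<times> 'a \<Rightarrow> (path \<times> int \<times> path) \<times> 'a" where
  "Ginf_mult G mul \<alpha> hg1 hg2 =
     (case (hg1, hg2) of (((x, m, y), g1), ((y', n, z), g2)) \<Rightarrow>
        ((x, m + n, z), mul g1 (apow G \<alpha> (- m) g2)))"

definition Ginf_inv :: "'a set \<Rightarrow> ('a \<Rightarrow> 'a) \<Rightarrow> ('a \<Rightarrow> 'a) \<Rightarrow>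
    (path \<times> int \<times> path) \<times> 'a \<Rightarrow> (path \<times> int \<times> path) \<times> 'a" where
  "Ginf_inv G iv \<alpha> hg =
     (case hg of ((x, m, y), g) \<Rightarrow> ((y, - m, x), apow G \<alpha> m (iv g)))"

end

theory Submission
  imports Defs
begin

text \<open>
  An arrow \<open>((x, m, y), g)\<close> of \<open>G\<^sup>\<infinity>\<^sub>\<alpha>\<close> has range \<open>(x, r g)\<close> and source
  \<open>(y, \<alpha>\<^sup>m (s g))\<close>. If two arrows have the same range and source, then \<open>s g\<close> and
  \<open>s g'\<close> lie in one \<open>G\<close>-orbit and \<open>s g' = \<alpha>\<^bsup>m - m'\<^esup>(s g)\<close>, so the orbit condition
  forces \<open>m = m'\<close>, after which principality of \<open>G\<close> forces \<open>g = g'\<close>.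
  Conversely, the constant infinite path \<open>z = e\<^sub>1e\<^sub>1\<dots>\<close> satisfies \<open>(z, l, z) \<in> H\<^sub>\<infinity>\<close>
  for every \<open>l\<close>; an arrow \<open>g : \<alpha>\<^sup>l(x) \<rightarrow> x\<close> of \<open>G\<close> then yields the arrows
  \<open>((z, -l, z), g)\<close> and \<open>((z, 0, z), x)\<close> with equal range and source.
\<close>

lemma apow_0 [simp]: "apow G \<alpha> 0 x = x"
  by (simp add: apow_def)

locale self_bijection =
  fixes G :: "'a set" and \<alpha> :: "'a \<Rightarrow> 'a"
  assumes bij: "bij_betw \<alpha> G G"
begin

lemma funpow_in_carrier: "x \<in> G \<Longrightarrow> (\<alpha> ^^ n) x \<in> G \<and> (inv_into G \<alpha> ^^ n) x \<in> G"
  using bij by (induction n) (auto simp: bij_betw_def inv_into_into)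

lemma apow_in_carrier: "x \<in> G \<Longrightarrow> apow G \<alpha> l x \<in> G"
  by (simp add: apow_def funpow_in_carrier)

lemma apow_succ:
  assumes "x \<in> G"
  shows "apow G \<alpha> (l + 1) x = \<alpha> (apow G \<alpha> l x)"
proof (cases "l \<ge> 0")
  case True
  then have "nat (l + 1) = Suc (nat l)" by simp
  with True show ?thesis by (simp add: apow_def)
next
  case False
  then have "nat (- l) = Suc (nat (- (l + 1)))" by simp
  with False assms bij show ?thesis
    by (simp add: apow_def funpow_in_carrier bij_betw_inv_into_right)
qed

lemma apow_pred:
  assumes "x \<in> G"
  shows "apow G \<alpha> (l - 1) x = inv_into G \<alpha> (apow G \<alpha> l x)"
  using apow_succ[OF assms, of "l - 1"] bij_betw_inv_into_left[OF bij] apow_in_carrier assms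
  by simp

lemma apow_add:
  assumes "x \<in> G"
  shows "apow G \<alpha> (a + b) x = apow G \<alpha> a (apow G \<alpha> b x)"
proof (induction a rule: int_induct[where k = 0])
  case (step1 i)
  have "apow G \<alpha> (i + 1 + b) x = apow G \<alpha> ((i + b) + 1) x" by (simp add: algebra_simps)
  with step1 show ?case by (simp add: apow_succ apow_in_carrier assms)
next
  case (step2 i)
  have "apow G \<alpha> (i - 1 + b) x = apow G \<alpha> ((i + b) - 1) x" by (simp add: algebra_simps)
  with step2 show ?case by (simp add: apow_pred apow_in_carrier assms)
qed simp

lemma apow_eq_apow_iff:
  assumes x: "x \<in> G" and y: "y \<in> G"
  shows "apow G \<alpha> m x = apow G \<alpha> n y \<longleftrightarrow> y = apow G \<alpha> (m - n) x"
proof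
  assume eq: "apow G \<alpha> m x = apow G \<alpha> n y"
  have "y = apow G \<alpha> (- n + n) y" by simp
  also have "\<dots> = apow G \<alpha> (- n) (apow G \<alpha> m x)" by (simp only: apow_add[OF y] eq)
  also have "\<dots> = apow G \<alpha> (m - n) x" by (simp add: apow_add[OF x, symmetric])
  finally show "y = apow G \<alpha> (m - n) x" .
next
  assume "y = apow G \<alpha> (m - n) x"
  then show "apow G \<alpha> m x = apow G \<alpha> n y" by (simp add: apow_add[OF x, symmetric])
qed

end

lemma groupoid_automorphism_self_bijection:
  "groupoid_automorphism G T r s mul iv \<alpha> \<Longrightarrow> self_bijection G \<alpha>"
  by unfold_locales (simp add: groupoid_automorphism_def)

lemma groupoid_source_in_unit_space:
  "groupoid G r s mul iv \<Longrightarrow> g \<in> G \<Longrightarrow> s g \<in> unit_space G r"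
  by (auto simp: groupoid_def unit_space_def)

lemma unit_space_source:
  "groupoid G r s mul iv \<Longrightarrow> x \<in> unit_space G r \<Longrightarrow> s x = x"
  by (auto simp: groupoid_def unit_space_def)

lemma unit_in_gorbit:
  assumes "groupoid G r s mul iv" and x: "x \<in> unit_space G r"
  shows "x \<in> gorbit G r s x"
proof -
  have "x \<in> G" "r x = x" "s x = x"
    using x unit_space_source[OF assms] by (auto simp: unit_space_def)
  then show ?thesis unfolding gorbit_def by force
qed

lemma gorbit_source_subset_gorbit_range:
  assumes gr: "groupoid G r s mul iv" and k: "k \<in> G"
  shows "gorbit G r s (s k) \<subseteq> gorbit G r s (r k)"
proof
  fix x assume "x \<in> gorbit G r s (s k)"
  then obtain h where h: "h \<in> G" "s h = s k" "x = r h" by (auto simp: gorbit_def)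
  have "iv k \<in> G" "r (iv k) = s k" "s (iv k) = r k"
    using gr k by (auto simp: groupoid_def)
  with gr h have "mul h (iv k) \<in> G \<and> r (mul h (iv k)) = r h \<and> s (mul h (iv k)) = s (iv k)"
    unfolding groupoid_def by metis
  with h \<open>s (iv k) = r k\<close>
  have "x = r (mul h (iv k))" "mul h (iv k) \<in> G" "s (mul h (iv k)) = r k" by auto
  then show "x \<in> gorbit G r s (r k)" unfolding gorbit_def by blast
qed

lemma gorbit_range_eq_gorbit_source:
  assumes gr: "groupoid G r s mul iv" and g: "g \<in> G"
  shows "gorbit G r s (r g) = gorbit G r s (s g)"
proof -
  have "iv g \<in> G" "r (iv g) = s g" "s (iv g) = r g" using gr g by (auto simp: groupoid_def)
  then show ?thesis
    using gorbit_source_subset_gorbit_range[OF gr g] gorbit_source_subset_gorbit_range[OF gr, of "iv g"]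
    by auto
qed

definition zero_path :: path where
  "zero_path = Inf (\<lambda>_. 0)"

lemma cat_zeros_zero_path: "cat (replicate k 0) zero_path = zero_path"
  by (auto simp: zero_path_def intro!: ext)

lemma zero_path_loop_in_Hinf: "(zero_path, l, zero_path) \<in> Hinf"
proof -
  define a b where "a = replicate (nat l) (0::nat)" and "b = replicate (nat (- l)) (0::nat)"
  have "(zero_path, l, zero_path) = (cat a zero_path, int (length a) - int (length b), cat b zero_path)"
    by (simp add: a_def b_def cat_zeros_zero_path)
  then show ?thesis unfolding Hinf_def by blast
qed

lemma Ginf_r_apply [simp]: "Ginf_r r ((x, m, y), g) = (x, r g)"
  by (simp add: Ginf_r_def Hr_def)

lemma Ginf_s_apply [simp]: "Ginf_s G s \<alpha> ((x, m, y), g) = (y, apow G \<alpha> m (s g))"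
  by (simp add: Ginf_s_def Hs_def Hc_def)

lemma is_principal_of_Ginf:
  assumes "is_principal (Ginf G) (Ginf_r r) (Ginf_s G s \<alpha>)"
  shows "is_principal G r s"
  unfolding is_principal_def
proof (rule inj_onI)
  fix g g' assume "g \<in> G" "g' \<in> G" "(r g, s g) = (r g', s g')"
  then have "((zero_path, 0, zero_path), g) \<in> Ginf G" "((zero_path, 0, zero_path), g') \<in> Ginf G"
    and "(Ginf_r r ((zero_path, 0, zero_path), g), Ginf_s G s \<alpha> ((zero_path, 0, zero_path), g)) =
         (Ginf_r r ((zero_path, 0, zero_path), g'), Ginf_s G s \<alpha> ((zero_path, 0, zero_path), g'))"
    using zero_path_loop_in_Hinf by (auto simp: Ginf_def)
  then have "((zero_path, 0, zero_path), g) = ((zero_path, 0, zero_path), g')"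
    using inj_onD[OF assms[unfolded is_principal_def]] by blast
  then show "g = g'" by simp
qed

lemma orbit_shift_trivial_of_Ginf:
  assumes P: "is_principal (Ginf G) (Ginf_r r) (Ginf_s G s \<alpha>)"
    and gr: "groupoid G r s mul iv" and \<alpha>: "self_bijection G \<alpha>"
    and x: "x \<in> unit_space G r"
    and orbit: "gorbit G r s x = gorbit G r s (apow G \<alpha> l x)"
  shows "l = 0"
proof -
  have xG: "x \<in> G" "r x = x" "s x = x"
    using x unit_space_source[OF gr x] by (auto simp: unit_space_def)
  obtain g where g: "g \<in> G" "r g = x" "s g = apow G \<alpha> l x"
    using unit_in_gorbit[OF gr x] orbit unfolding gorbit_def by auto
  have "apow G \<alpha> (- l) (s g) = x"
    using g self_bijection.apow_add[OF \<alpha> xG(1), of "- l" l] by simp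
  with g xG have "((zero_path, - l, zero_path), g) \<in> Ginf G" "((zero_path, 0, zero_path), x) \<in> Ginf G"
    and "(Ginf_r r ((zero_path, - l, zero_path), g), Ginf_s G s \<alpha> ((zero_path, - l, zero_path), g)) =
         (Ginf_r r ((zero_path, 0, zero_path), x), Ginf_s G s \<alpha> ((zero_path, 0, zero_path), x))"
    using zero_path_loop_in_Hinf by (auto simp: Ginf_def)
  then have "((zero_path, - l, zero_path), g) = ((zero_path, 0, zero_path), x)"
    using inj_onD[OF P[unfolded is_principal_def]] by blast
  then show "l = 0" by simp
qed

lemma is_principal_Ginf:
  assumes gr: "groupoid G r s mul iv" and \<alpha>: "self_bijection G \<alpha>"
    and principal: "is_principal G r s"
    and no_shift: "\<forall>x \<in> unit_space G r. \<forall>l :: int.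
                     gorbit G r s x = gorbit G r s (apow G \<alpha> l x) \<longrightarrow> l = 0"
  shows "is_principal (Ginf G) (Ginf_r r) (Ginf_s G s \<alpha>)"
  unfolding is_principal_def
proof (rule inj_onI)
  fix p q assume "p \<in> Ginf G" "q \<in> Ginf G"
    and eq: "(Ginf_r r p, Ginf_s G s \<alpha> p) = (Ginf_r r q, Ginf_s G s \<alpha> q)"
  then obtain x m y g x' m' y' g' where pq: "p = ((x, m, y), g)" "q = ((x', m', y'), g')"
    and gG: "g \<in> G" "g' \<in> G"
    by (auto simp: Ginf_def)
  have same: "x = x'" "y = y'" "r g = r g'"
    and "apow G \<alpha> m (s g) = apow G \<alpha> m' (s g')"
    using eq by (auto simp: pq)
  moreover have "s g \<in> G" "s g' \<in> G"
    using gG groupoid_source_in_unit_space[OF gr] by (auto simp: unit_space_def)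
  ultimately have shift: "s g' = apow G \<alpha> (m - m') (s g)"
    using self_bijection.apow_eq_apow_iff[OF \<alpha>] by blast
  have "gorbit G r s (s g) = gorbit G r s (s g')"
    using gorbit_range_eq_gorbit_source[OF gr] gG same(3) by metis
  then have "m = m'"
    using no_shift groupoid_source_in_unit_space[OF gr gG(1)] shift by fastforce
  with shift have "(r g, s g) = (r g', s g')" by (simp add: same)
  with principal gG have "g = g'" by (auto simp: is_principal_def inj_on_def)
  with same \<open>m = m'\<close> show "p = q" by (simp add: pq)
qed

theorem proposition5p1:
  fixes G :: "'a set" and T :: "'a topology"
    and r s :: "'a \<Rightarrow> 'a" and mul :: "'a \<Rightarrow> 'a \<Rightarrow> 'a" and iv :: "'a \<Rightarrow> 'a"
    and \<alpha> :: "'a \<Rightarrow> 'a"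
  assumes "etale_groupoid G T r s mul iv"
    and "locally_compact_space T"
    and "Hausdorff_space T"
    and "groupoid_automorphism G T r s mul iv \<alpha>"
  shows "is_principal (Ginf G) (Ginf_r r) (Ginf_s G s \<alpha>) \<longleftrightarrow>
         (is_principal G r s \<and>
          (\<forall>x \<in> unit_space G r. \<forall>l :: int.
              gorbit G r s x = gorbit G r s (apow G \<alpha> l x) \<longrightarrow> l = 0))"
proof -
  have gr: "groupoid G r s mul iv"
    using assms(1) by (simp add: etale_groupoid_def topological_groupoid_def)
  have \<alpha>: "self_bijection G \<alpha>"
    using assms(4) by (rule groupoid_automorphism_self_bijection)
  show ?thesis
    using is_principal_of_Ginf orbit_shift_trivial_of_Ginf[OF _ gr \<alpha>] is_principal_Ginf[OF gr \<alpha>]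
    by blast
qed

end
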